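(* Let $n\ge1$, let $T=(T_{ii'jj'kk'})\in(\mathbb C^n)^{\otimes6}$ be nonzero and Hermitian when viewed as an operator on $\mathbb C^{n^3}$ (rows indexed by $(i,j,k)$, columns by $(i',j',k')$). Let $\mathcal S=\{P_1,\dots,P_{n^2}\}$ be a basis of $M_n$, orthogonal for the Hilbert–Schmidt inner product, consisting of Hermitian matrices with $P^2=\mathrm{Id}$. For $P,Q,R\in\mathcal S$ put $G_{P,Q,R}=\sum T_{ii'jj'kk'}\overline{P_{ii'}Q_{jj'}R_{kk'}}\in\mathbb R$ and $Z=\sum_{P,Q,R}|G_{P,Q,R}|$, and assume $Z>0$. Let $G$ be the three-player XOR game in which the triple $(P,Q,R)$ is asked with probability $|G_{P,Q,R}|/Z$ and the answers are accepted iff their parity matches the sign of $G_{P,Q,R}$. Then $\beta(G)\le Z^{-1}n^{9/2}\|T\|_{3,\epsilon}$ and $\beta^*(G)\ge Z^{-1}n^3\|T\|_{2,\epsilon}$; in particular $\beta^*(G)\ge n^{-3/2}\frac{\|T\|_{2,\epsilon}}{\|T\|_{3,\epsilon}}\beta(G)$.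
   Context: $\|T\|_{2,\epsilon}$ is the operator norm of $T$ viewed as an operator on $\mathbb C^{n^3}$ (equivalently the injective norm of $T\in\mathbb C^{n^3}\otimes\mathbb C^{n^3}$). $\|T\|_{3,\epsilon}=\sup|\sum T_{ii'jj'kk'}U_{ii'}V_{jj'}W_{kk'}|$ over $U,V,W\in\mathbb C^{n^2}$ of Euclidean norm at most $1$ (the injective norm of $T\in\mathbb C^{n^2}\otimes\mathbb C^{n^2}\otimes\mathbb C^{n^2}$). For a three-player XOR game with question distribution $\pi(x,y,z)$ and target signs $s_{xyz}\in\{\pm1\}$, the classical bias is $\beta(G)=\max_{a_x,b_y,c_z\in\{\pm1\}}|\sum\pi(x,y,z)s_{xyz}a_xb_yc_z|$ and the entangled bias is $\beta^*(G)=\sup|\sum\pi(x,y,z)s_{xyz}\langle\psi|A_x\otimes B_y\otimes C_z|\psi\rangle|$ over all $d$, unit $|\psi\rangle\in(\mathbb C^d)^{\otimes3}$ and Hermitian $A_x,B_y,C_z\in M_d$ squaring to the identity (observables). *)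

theory Defs
  imports "HOL-Analysis.Analysis"
begin

text \<open>Matrices in M_n are functions 'n => 'n => complex, with n = CARD('n).
  The 6-tensor T is indexed T i i' j j' k k'.\<close>

type_synonym 'n mat = "'n \<Rightarrow> 'n \<Rightarrow> complex"
type_synonym 'n tensor6 = "'n \<Rightarrow> 'n \<Rightarrow> 'n \<Rightarrow> 'n \<Rightarrow> 'n \<Rightarrow> 'n \<Rightarrow> complex"

text \<open>T is Hermitian as an operator on C^(n^3), rows (i,j,k), columns (i',j',k').\<close>
definition tensor_hermitian :: "('n::finite) tensor6 \<Rightarrow> bool" where
  "tensor_hermitian T \<longleftrightarrow> (\<forall>i i' j j' k k'. T i i' j j' k k' = cnj (T i' i j' j k' k))"

definition mat_hermitian :: "('n::finite) mat \<Rightarrow> bool" where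
  "mat_hermitian P \<longleftrightarrow> (\<forall>i j. P i j = cnj (P j i))"

definition mat_mult :: "('n::finite) mat \<Rightarrow> 'n mat \<Rightarrow> 'n mat" where
  "mat_mult P Q = (\<lambda>i j. \<Sum>k\<in>UNIV. P i k * Q k j)"

definition mat_id :: "('n::finite) mat" where
  "mat_id = (\<lambda>i j. if i = j then 1 else 0)"

definition hs_inner :: "('n::finite) mat \<Rightarrow> 'n mat \<Rightarrow> complex" where
  "hs_inner P Q = (\<Sum>i\<in>UNIV. \<Sum>j\<in>UNIV. cnj (P i j) * Q i j)"

definition hs_norm2 :: "('n::finite) mat \<Rightarrow> real" where
  "hs_norm2 U = (\<Sum>i\<in>UNIV. \<Sum>j\<in>UNIV. (cmod (U i j))^2)"

definition pauli_like_basis :: "('n::finite) mat set \<Rightarrow> bool" where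
  "pauli_like_basis S \<longleftrightarrow>
     finite S \<and> card S = CARD('n)^2 \<and>
     (\<forall>M::'n mat. \<exists>c. M = (\<lambda>i j. \<Sum>P\<in>S. c P * P i j)) \<and>
     (\<forall>P\<in>S. \<forall>Q\<in>S. P \<noteq> Q \<longrightarrow> hs_inner P Q = 0) \<and>
     (\<forall>P\<in>S. mat_hermitian P \<and> mat_mult P P = mat_id)"

text \<open>Operator norm of T on C^(n^3) (= injective norm in C^(n^3) (x) C^(n^3)).\<close>
definition norm_2eps :: "('n::finite) tensor6 \<Rightarrow> real" where
  "norm_2eps T = Sup {sqrt (\<Sum>i\<in>UNIV. \<Sum>j\<in>UNIV. \<Sum>k\<in>UNIV.
        (cmod (\<Sum>i'\<in>UNIV. \<Sum>j'\<in>UNIV. \<Sum>k'\<in>UNIV. T i i' j j' k k' * u i' j' k'))^2)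
      | u :: 'n \<Rightarrow> 'n \<Rightarrow> 'n \<Rightarrow> complex.
        (\<Sum>i\<in>UNIV. \<Sum>j\<in>UNIV. \<Sum>k\<in>UNIV. (cmod (u i j k))^2) \<le> 1}"

text \<open>Injective norm of T in C^(n^2) (x) C^(n^2) (x) C^(n^2).\<close>
definition norm_3eps :: "('n::finite) tensor6 \<Rightarrow> real" where
  "norm_3eps T = Sup {cmod (\<Sum>i\<in>UNIV. \<Sum>i'\<in>UNIV. \<Sum>j\<in>UNIV. \<Sum>j'\<in>UNIV. \<Sum>k\<in>UNIV. \<Sum>k'\<in>UNIV.
          T i i' j j' k k' * U i i' * V j j' * W k k')
      | U V W. hs_norm2 U \<le> 1 \<and> hs_norm2 V \<le> 1 \<and> hs_norm2 W \<le> 1}"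

definition classical_bias ::
  "'x set \<Rightarrow> 'y set \<Rightarrow> 'z set \<Rightarrow> ('x \<Rightarrow> 'y \<Rightarrow> 'z \<Rightarrow> real) \<Rightarrow> ('x \<Rightarrow> 'y \<Rightarrow> 'z \<Rightarrow> real) \<Rightarrow> real" where
  "classical_bias X Y Z' q s = Sup {\<bar>\<Sum>x\<in>X. \<Sum>y\<in>Y. \<Sum>z\<in>Z'. q x y z * s x y z * a x * b y * c z\<bar>
      | a b c. (\<forall>x\<in>X. a x \<in> {-1, 1}) \<and> (\<forall>y\<in>Y. b y \<in> {-1, 1}) \<and> (\<forall>z\<in>Z'. c z \<in> {-1, 1})}"

text \<open>d x d matrices/vectors are functions on nat restricted to indices < d.\<close>
definition observable :: "nat \<Rightarrow> (nat \<Rightarrow> nat \<Rightarrow> complex) \<Rightarrow> bool" where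
  "observable d A \<longleftrightarrow>
     (\<forall>a<d. \<forall>b<d. A a b = cnj (A b a)) \<and>
     (\<forall>a<d. \<forall>b<d. (\<Sum>e<d. A a e * A e b) = (if a = b then 1 else 0))"

definition unit_state3 :: "nat \<Rightarrow> (nat \<Rightarrow> nat \<Rightarrow> nat \<Rightarrow> complex) \<Rightarrow> bool" where
  "unit_state3 d psi \<longleftrightarrow> (\<Sum>a<d. \<Sum>b<d. \<Sum>c<d. (cmod (psi a b c))^2) = 1"

definition expect3 :: "nat \<Rightarrow> (nat \<Rightarrow> nat \<Rightarrow> nat \<Rightarrow> complex) \<Rightarrow> (nat \<Rightarrow> nat \<Rightarrow> complex)
     \<Rightarrow> (nat \<Rightarrow> nat \<Rightarrow> complex) \<Rightarrow> (nat \<Rightarrow> nat \<Rightarrow> complex) \<Rightarrow> complex" where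
  "expect3 d psi A B C = (\<Sum>a<d. \<Sum>b<d. \<Sum>c<d. \<Sum>a'<d. \<Sum>b'<d. \<Sum>c'<d.
      cnj (psi a b c) * A a a' * B b b' * C c c' * psi a' b' c')"

definition entangled_bias ::
  "'x set \<Rightarrow> 'y set \<Rightarrow> 'z set \<Rightarrow> ('x \<Rightarrow> 'y \<Rightarrow> 'z \<Rightarrow> real) \<Rightarrow> ('x \<Rightarrow> 'y \<Rightarrow> 'z \<Rightarrow> real) \<Rightarrow> real" where
  "entangled_bias X Y Z' q s = Sup {cmod (\<Sum>x\<in>X. \<Sum>y\<in>Y. \<Sum>z\<in>Z'.
          complex_of_real (q x y z * s x y z) * expect3 d psi (A x) (B y) (C z))
      | d psi A B C. unit_state3 d psi \<and> (\<forall>x\<in>X. observable d (A x))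
          \<and> (\<forall>y\<in>Y. observable d (B y)) \<and> (\<forall>z\<in>Z'. observable d (C z))}"

text \<open>The coefficients G_{P,Q,R} (real by hermiticity; we take the real part).\<close>
definition coeffG :: "('n::finite) tensor6 \<Rightarrow> 'n mat \<Rightarrow> 'n mat \<Rightarrow> 'n mat \<Rightarrow> real" where
  "coeffG T P Q R = Re (\<Sum>i\<in>UNIV. \<Sum>i'\<in>UNIV. \<Sum>j\<in>UNIV. \<Sum>j'\<in>UNIV. \<Sum>k\<in>UNIV. \<Sum>k'\<in>UNIV.
      T i i' j j' k k' * cnj (P i i' * Q j j' * R k k'))"

definition normZ :: "('n::finite) tensor6 \<Rightarrow> 'n mat set \<Rightarrow> real" where
  "normZ T S = (\<Sum>P\<in>S. \<Sum>Q\<in>S. \<Sum>R\<in>S. \<bar>coeffG T P Q R\<bar>)"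

definition game_pi :: "('n::finite) tensor6 \<Rightarrow> 'n mat set \<Rightarrow> 'n mat \<Rightarrow> 'n mat \<Rightarrow> 'n mat \<Rightarrow> real" where
  "game_pi T S P Q R = \<bar>coeffG T P Q R\<bar> / normZ T S"

text \<open>Sign of G (the value at G = 0 is irrelevant since then pi = 0; we use +1).\<close>
definition game_sign :: "('n::finite) tensor6 \<Rightarrow> 'n mat \<Rightarrow> 'n mat \<Rightarrow> 'n mat \<Rightarrow> real" where
  "game_sign T P Q R = (if coeffG T P Q R < 0 then -1 else 1)"

end

theory Submission
  imports Defs
begin

text \<open>
  Orthogonality of the basis S gives the completeness relation
  sum over P of P(a,b) conj(P(c,d)) = n [a = c and b = d], hence the expansion
  sum over P, Q, R of G(P,Q,R) P (x) Q (x) R = n^3 T.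

  Against sign strategies a, b, c the classical value is Re <T, U (x) V (x) W> / Z, where
  U = sum over P of a(P) conj(P), and similarly V, W. By Parseval |U|_HS^2 = n |S| = n^3,
  so the value is at most n^(9/2) |T|_(3,eps) / Z.

  Quantum players who use the basis matrices themselves as observables on a state psi in
  (C^n)^(x)3 attain, by the expansion, the value n^3 <psi, T psi> / Z. For Hermitian T the
  supremum of |<psi, T psi>| over unit vectors psi is the operator norm (polarization), which
  gives the lower bound.
\<close>

lemma sum_sum_delta:
  fixes c :: "'a::finite" and d :: "'b::finite"
  shows "(\<Sum>i\<in>UNIV. \<Sum>j\<in>UNIV. if c = i \<and> d = j then f i j else 0) = (f c d :: 'c::comm_monoid_add)"
proof -
  have "\<And>i. (\<Sum>j\<in>UNIV. if c = i \<and> d = j then f i j else 0) = (if c = i then f i d else 0)"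
    by (simp add: if_if_eq_conj[symmetric])
  then show ?thesis by simp
qed

lemma sum_sum_matrix_unit_mult:
  fixes a :: "'a::finite" and a' :: "'b::finite"
  shows "(\<Sum>i\<in>UNIV. \<Sum>i'\<in>UNIV. (if a = i \<and> a' = i' then x else 0) * f i i') = x * (f a a' :: 'c::semiring_0)"
proof -
  have "(\<Sum>i\<in>UNIV. \<Sum>i'\<in>UNIV. (if a = i \<and> a' = i' then x else 0) * f i i')
      = (\<Sum>i\<in>UNIV. \<Sum>i'\<in>UNIV. if a = i \<and> a' = i' then x * f i i' else 0)"
    by (intro sum.cong) auto
  then show ?thesis by (simp only: sum_sum_delta)
qed

lemma sum_swap_inside_2:
  "(\<Sum>P\<in>A. \<Sum>i\<in>I. \<Sum>j\<in>J. f P i j) = (\<Sum>i\<in>I. \<Sum>j\<in>J. \<Sum>P\<in>A. (f P i j :: 'c::comm_monoid_add))"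
  by (simp only: sum.swap[of _ A])

lemma sum_swap_inside_6:
  "(\<Sum>P\<in>A. \<Sum>i\<in>I1. \<Sum>i'\<in>I2. \<Sum>j\<in>I3. \<Sum>j'\<in>I4. \<Sum>k\<in>I5. \<Sum>k'\<in>I6. f P i i' j j' k k')
 = (\<Sum>i\<in>I1. \<Sum>i'\<in>I2. \<Sum>j\<in>I3. \<Sum>j'\<in>I4. \<Sum>k\<in>I5. \<Sum>k'\<in>I6. \<Sum>P\<in>A. (f P i i' j j' k k' :: 'c::comm_monoid_add))"
  by (simp only: sum.swap[of _ A])

lemma sum_6_swap_pairs:
  "(\<Sum>i\<in>UNIV. \<Sum>i'\<in>UNIV. \<Sum>j\<in>UNIV. \<Sum>j'\<in>UNIV. \<Sum>k\<in>UNIV. \<Sum>k'\<in>UNIV. g i i' j j' k k')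
 = (\<Sum>i\<in>UNIV. \<Sum>i'\<in>UNIV. \<Sum>j\<in>UNIV. \<Sum>j'\<in>UNIV. \<Sum>k\<in>UNIV. \<Sum>k'\<in>UNIV. (g i' i j' j k' k :: 'c::comm_monoid_add))"
  by (subst sum.swap) (intro sum.cong refl; subst sum.swap; intro sum.cong refl; subst sum.swap; rule refl)

lemma sum_UNIV_triple:
  fixes X :: "'a::finite \<times> 'b::finite \<times> 'c::finite \<Rightarrow> 'd::comm_monoid_add"
  shows "(\<Sum>t\<in>UNIV. X t) = (\<Sum>i\<in>UNIV. \<Sum>j\<in>UNIV. \<Sum>k\<in>UNIV. X (i, j, k))"
  by (simp add: UNIV_Times_UNIV[symmetric] sum.cartesian_product del: UNIV_Times_UNIV)

section \<open>Pauli-like bases\<close>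

lemma hs_inner_self_eq_card:
  fixes P :: "('n::finite) mat"
  assumes "mat_hermitian P" "mat_mult P P = mat_id"
  shows "hs_inner P P = of_nat CARD('n)"
proof -
  have "hs_inner P P = (\<Sum>i\<in>UNIV. \<Sum>j\<in>UNIV. P j i * P i j)"
    using assms(1) unfolding hs_inner_def mat_hermitian_def by (metis (no_types, lifting) sum.cong)
  also have "\<dots> = (\<Sum>j\<in>UNIV. mat_mult P P j j)"
    unfolding mat_mult_def by (rule sum.swap)
  also have "\<dots> = of_nat CARD('n)"
    using assms(2) by (simp add: mat_id_def)
  finally show ?thesis .
qed

lemma pauli_like_basis_hs_inner:
  fixes S :: "('n::finite) mat set"
  assumes "pauli_like_basis S" "P \<in> S" "Q \<in> S"
  shows "hs_inner P Q = (if P = Q then of_nat CARD('n) else 0)"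
  using assms unfolding pauli_like_basis_def by (auto intro: hs_inner_self_eq_card)

lemma pauli_like_basis_completeness:
  fixes S :: "('n::finite) mat set"
  assumes "pauli_like_basis S"
  shows "(\<Sum>P\<in>S. P a b * cnj (P c d)) = (if a = c \<and> b = d then of_nat CARD('n) else 0)"
proof -
  have fin: "finite S" using assms by (simp add: pauli_like_basis_def)
  define E :: "'n mat" where "E = (\<lambda>i j. if c = i \<and> d = j then 1 else 0)"
  obtain w where w: "E = (\<lambda>i j. \<Sum>P\<in>S. w P * P i j)"
    using assms unfolding pauli_like_basis_def by blast
  \<comment> \<open>Taking the Hilbert--Schmidt product with Q isolates the coefficient of Q.\<close>
  have coef: "cnj (Q c d) = w Q * of_nat CARD('n)" if Q: "Q \<in> S" for Q
  proof -
    have "cnj (Q c d) = hs_inner Q E"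
      using sum_sum_matrix_unit_mult[of c d 1 "\<lambda>i j. cnj (Q i j)"]
      unfolding hs_inner_def E_def by (simp add: mult.commute)
    also have "\<dots> = (\<Sum>P\<in>S. w P * hs_inner Q P)"
      unfolding w hs_inner_def by (simp add: sum_distrib_left sum.swap[where A=S] mult_ac)
    also have "\<dots> = (\<Sum>P\<in>S. if P = Q then w Q * of_nat CARD('n) else 0)"
      by (intro sum.cong) (auto simp: pauli_like_basis_hs_inner[OF assms Q])
    also have "\<dots> = w Q * of_nat CARD('n)"
      using fin Q by simp
    finally show ?thesis .
  qed
  have "(\<Sum>P\<in>S. P a b * cnj (P c d)) = of_nat CARD('n) * E a b"
    unfolding w by (simp add: coef sum_distrib_left mult_ac)
  then show ?thesis by (auto simp: E_def)
qed

section \<open>The trilinear pairing with a 6-tensor\<close>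

definition tensor_pairing :: "('n::finite) tensor6 \<Rightarrow> 'n mat \<Rightarrow> 'n mat \<Rightarrow> 'n mat \<Rightarrow> complex" where
  "tensor_pairing T U V W = (\<Sum>i\<in>UNIV. \<Sum>i'\<in>UNIV. \<Sum>j\<in>UNIV. \<Sum>j'\<in>UNIV. \<Sum>k\<in>UNIV. \<Sum>k'\<in>UNIV.
      T i i' j j' k k' * U i i' * V j j' * W k k')"

lemma tensor_pairing_matrix_units:
  "tensor_pairing T (\<lambda>i i'. if a = i \<and> a' = i' then x else 0) (\<lambda>j j'. if b = j \<and> b' = j' then x else 0)
     (\<lambda>k k'. if c = k \<and> c' = k' then x else 0) = x ^ 3 * T a a' b b' c c'"
proof -
  have "tensor_pairing T (\<lambda>i i'. if a = i \<and> a' = i' then x else 0) (\<lambda>j j'. if b = j \<and> b' = j' then x else 0)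
     (\<lambda>k k'. if c = k \<and> c' = k' then x else 0)
   = (\<Sum>i\<in>UNIV. \<Sum>i'\<in>UNIV. (if a = i \<and> a' = i' then x else 0) *
      (\<Sum>j\<in>UNIV. \<Sum>j'\<in>UNIV. (if b = j \<and> b' = j' then x else 0) *
        (\<Sum>k\<in>UNIV. \<Sum>k'\<in>UNIV. (if c = k \<and> c' = k' then x else 0) * T i i' j j' k k')))"
    unfolding tensor_pairing_def by (simp add: sum_distrib_left mult_ac)
  then show ?thesis by (simp only: sum_sum_matrix_unit_mult) (simp add: power3_eq_cube)
qed

lemma tensor_pairing_sum_left:
  "(\<Sum>P\<in>A. x P * tensor_pairing T (U P) V W) = tensor_pairing T (\<lambda>i i'. \<Sum>P\<in>A. x P * U P i i') V W"
proof -
  have "(\<Sum>P\<in>A. x P * tensor_pairing T (U P) V W) = (\<Sum>P\<in>A. \<Sum>i\<in>UNIV. \<Sum>i'\<in>UNIV. \<Sum>j\<in>UNIV. \<Sum>j'\<in>UNIV. \<Sum>k\<in>UNIV. \<Sum>k'\<in>UNIV.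
      T i i' j j' k k' * (x P * U P i i') * V j j' * W k k')"
    unfolding tensor_pairing_def by (simp add: sum_distrib_left mult_ac)
  also have "\<dots> = tensor_pairing T (\<lambda>i i'. \<Sum>P\<in>A. x P * U P i i') V W"
    unfolding tensor_pairing_def by (subst sum_swap_inside_6) (simp add: sum_distrib_left sum_distrib_right)
  finally show ?thesis .
qed

lemma tensor_pairing_sum_middle:
  "(\<Sum>Q\<in>A. x Q * tensor_pairing T U (V Q) W) = tensor_pairing T U (\<lambda>j j'. \<Sum>Q\<in>A. x Q * V Q j j') W"
proof -
  have "(\<Sum>Q\<in>A. x Q * tensor_pairing T U (V Q) W) = (\<Sum>Q\<in>A. \<Sum>i\<in>UNIV. \<Sum>i'\<in>UNIV. \<Sum>j\<in>UNIV. \<Sum>j'\<in>UNIV. \<Sum>k\<in>UNIV. \<Sum>k'\<in>UNIV.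
      T i i' j j' k k' * U i i' * (x Q * V Q j j') * W k k')"
    unfolding tensor_pairing_def by (simp add: sum_distrib_left mult_ac)
  also have "\<dots> = tensor_pairing T U (\<lambda>j j'. \<Sum>Q\<in>A. x Q * V Q j j') W"
    unfolding tensor_pairing_def by (subst sum_swap_inside_6) (simp add: sum_distrib_left sum_distrib_right)
  finally show ?thesis .
qed

lemma tensor_pairing_sum_right:
  "(\<Sum>R\<in>A. x R * tensor_pairing T U V (W R)) = tensor_pairing T U V (\<lambda>k k'. \<Sum>R\<in>A. x R * W R k k')"
proof -
  have "(\<Sum>R\<in>A. x R * tensor_pairing T U V (W R)) = (\<Sum>R\<in>A. \<Sum>i\<in>UNIV. \<Sum>i'\<in>UNIV. \<Sum>j\<in>UNIV. \<Sum>j'\<in>UNIV. \<Sum>k\<in>UNIV. \<Sum>k'\<in>UNIV.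
      T i i' j j' k k' * U i i' * V j j' * (x R * W R k k'))"
    unfolding tensor_pairing_def by (simp add: sum_distrib_left mult_ac)
  also have "\<dots> = tensor_pairing T U V (\<lambda>k k'. \<Sum>R\<in>A. x R * W R k k')"
    unfolding tensor_pairing_def by (subst sum_swap_inside_6) (simp add: sum_distrib_left)
  finally show ?thesis .
qed

lemma tensor_pairing_sum:
  "(\<Sum>P\<in>A. \<Sum>Q\<in>B. \<Sum>R\<in>C. x P * y Q * z R * tensor_pairing T (U P) (V Q) (W R))
   = tensor_pairing T (\<lambda>i i'. \<Sum>P\<in>A. x P * U P i i') (\<lambda>j j'. \<Sum>Q\<in>B. y Q * V Q j j') (\<lambda>k k'. \<Sum>R\<in>C. z R * W R k k')"
proof -
  have "(\<Sum>P\<in>A. \<Sum>Q\<in>B. \<Sum>R\<in>C. x P * y Q * z R * tensor_pairing T (U P) (V Q) (W R))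
    = (\<Sum>P\<in>A. x P * (\<Sum>Q\<in>B. y Q * (\<Sum>R\<in>C. z R * tensor_pairing T (U P) (V Q) (W R))))"
    by (simp add: sum_distrib_left mult.assoc)
  then show ?thesis
    by (simp only: tensor_pairing_sum_right tensor_pairing_sum_middle tensor_pairing_sum_left)
qed

lemma tensor_pairing_scale:
  "tensor_pairing T (\<lambda>i j. x * U i j) (\<lambda>i j. y * V i j) (\<lambda>i j. z * W i j) = x * y * z * tensor_pairing T U V W"
  unfolding tensor_pairing_def by (simp add: sum_distrib_left mult_ac)

definition mat_cnj :: "('n::finite) mat \<Rightarrow> 'n mat" where
  "mat_cnj P = (\<lambda>i j. cnj (P i j))"

lemma coeffG_eq_Re_tensor_pairing:
  "coeffG T P Q R = Re (tensor_pairing T (mat_cnj P) (mat_cnj Q) (mat_cnj R))"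
  unfolding coeffG_def tensor_pairing_def mat_cnj_def by (simp add: mult_ac)

lemma of_real_coeffG:
  assumes "tensor_hermitian T" "mat_hermitian P" "mat_hermitian Q" "mat_hermitian R"
  shows "complex_of_real (coeffG T P Q R) = tensor_pairing T (mat_cnj P) (mat_cnj Q) (mat_cnj R)"
proof -
  let ?G = "tensor_pairing T (mat_cnj P) (mat_cnj Q) (mat_cnj R)"
  have "cnj ?G = (\<Sum>i\<in>UNIV. \<Sum>i'\<in>UNIV. \<Sum>j\<in>UNIV. \<Sum>j'\<in>UNIV. \<Sum>k\<in>UNIV. \<Sum>k'\<in>UNIV.
      T i' i j' j k' k * cnj (P i' i) * cnj (Q j' j) * cnj (R k' k))"
    using assms unfolding tensor_pairing_def mat_cnj_def cnj_sum complex_cnj_mult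
      tensor_hermitian_def mat_hermitian_def
    by (intro sum.cong refl) (metis complex_cnj_cnj)
  also have "\<dots> = ?G"
    unfolding tensor_pairing_def mat_cnj_def by (rule sum_6_swap_pairs[symmetric])
  finally have "cnj ?G = ?G" .
  then show ?thesis
    by (simp add: coeffG_eq_Re_tensor_pairing complex_eq_iff)
qed

lemma pauli_like_basis_expansion:
  fixes T :: "('n::finite) tensor6" and S :: "'n mat set"
  assumes "pauli_like_basis S"
  shows "(\<Sum>P\<in>S. \<Sum>Q\<in>S. \<Sum>R\<in>S. P a a' * Q b b' * R c c' * tensor_pairing T (mat_cnj P) (mat_cnj Q) (mat_cnj R))
     = of_nat CARD('n) ^ 3 * T a a' b b' c c'"
proof -
  have "(\<lambda>i i'. \<Sum>P\<in>S. P x y * mat_cnj P i i') = (\<lambda>i i'. if x = i \<and> y = i' then of_nat CARD('n) else 0)"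
    for x y
    unfolding mat_cnj_def by (simp add: pauli_like_basis_completeness[OF assms])
  then show ?thesis
    by (simp add: tensor_pairing_sum tensor_pairing_matrix_units)
qed

section \<open>The injective norm and the classical bias\<close>

lemma hs_norm2_nonneg: "hs_norm2 U \<ge> 0"
  unfolding hs_norm2_def by (simp add: sum_nonneg)

lemma hs_norm2_eq_0_iff: "hs_norm2 U = 0 \<longleftrightarrow> U = (\<lambda>_ _. 0)"
  unfolding hs_norm2_def by (simp add: sum_nonneg_eq_0_iff sum_nonneg fun_eq_iff)

lemma hs_norm2_scale: "hs_norm2 (\<lambda>i j. c * U i j) = (cmod c)^2 * hs_norm2 U"
  unfolding hs_norm2_def by (simp add: sum_distrib_left norm_mult power_mult_distrib)

lemma norm_entry_le_one:
  assumes "hs_norm2 U \<le> 1"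
  shows "cmod (U i j) \<le> 1"
proof -
  have "(cmod (U i j))^2 \<le> (\<Sum>j'\<in>UNIV. (cmod (U i j'))^2)"
    by (rule member_le_sum) auto
  also have "\<dots> \<le> hs_norm2 U"
    unfolding hs_norm2_def by (rule member_le_sum) (auto intro: sum_nonneg)
  finally have "(cmod (U i j))^2 \<le> 1"
    using assms by simp
  then show ?thesis
    by (simp add: abs_square_le_1)
qed

lemma bdd_above_tensor_pairing:
  "bdd_above {cmod (tensor_pairing T U V W) | U V W. hs_norm2 U \<le> 1 \<and> hs_norm2 V \<le> 1 \<and> hs_norm2 W \<le> 1}"
proof (rule bdd_aboveI, safe)
  fix U V W :: "'a::finite mat"
  assume "hs_norm2 U \<le> 1" "hs_norm2 V \<le> 1" "hs_norm2 W \<le> 1"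
  then have "cmod (U i i') * cmod (V j j') * cmod (W k k') \<le> 1" for i i' j j' k k'
    by (intro mult_le_one norm_entry_le_one) auto
  then have "cmod (T i i' j j' k k' * U i i' * V j j' * W k k') \<le> cmod (T i i' j j' k k')" for i i' j j' k k'
    using mult_left_le[of _ "cmod (T i i' j j' k k')"] by (simp add: norm_mult mult.assoc)
  then show "cmod (tensor_pairing T U V W)
      \<le> (\<Sum>i\<in>UNIV. \<Sum>i'\<in>UNIV. \<Sum>j\<in>UNIV. \<Sum>j'\<in>UNIV. \<Sum>k\<in>UNIV. \<Sum>k'\<in>UNIV. cmod (T i i' j j' k k'))"
    unfolding tensor_pairing_def by (intro sum_norm_le)
qed

lemma norm_3eps_eq_Sup_tensor_pairing:
  "norm_3eps T = Sup {cmod (tensor_pairing T U V W) | U V W. hs_norm2 U \<le> 1 \<and> hs_norm2 V \<le> 1 \<and> hs_norm2 W \<le> 1}"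
  unfolding norm_3eps_def tensor_pairing_def by (simp add: mult.assoc)

lemma norm_tensor_pairing_le_norm_3eps:
  assumes "hs_norm2 U \<le> 1" "hs_norm2 V \<le> 1" "hs_norm2 W \<le> 1"
  shows "cmod (tensor_pairing T U V W) \<le> norm_3eps T"
  unfolding norm_3eps_eq_Sup_tensor_pairing
  by (rule cSup_upper[OF _ bdd_above_tensor_pairing]) (use assms in blast)

lemma norm_3eps_nonneg: "norm_3eps T \<ge> 0"
  using norm_tensor_pairing_le_norm_3eps[of "\<lambda>_ _. 0" "\<lambda>_ _. 0" "\<lambda>_ _. 0" T]
  by (simp add: hs_norm2_def tensor_pairing_def)

lemma norm_tensor_pairing_le:
  "cmod (tensor_pairing T U V W) \<le> sqrt (hs_norm2 U) * sqrt (hs_norm2 V) * sqrt (hs_norm2 W) * norm_3eps T"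
proof (cases "hs_norm2 U = 0 \<or> hs_norm2 V = 0 \<or> hs_norm2 W = 0")
  case True
  then have "tensor_pairing T U V W = 0"
    by (auto simp: hs_norm2_eq_0_iff tensor_pairing_def)
  then show ?thesis
    by (simp add: norm_3eps_nonneg hs_norm2_nonneg)
next
  case False
  define u v w where "u = sqrt (hs_norm2 U)" and "v = sqrt (hs_norm2 V)" and "w = sqrt (hs_norm2 W)"
  have pos: "u > 0" "v > 0" "w > 0"
    using False hs_norm2_nonneg[of U] hs_norm2_nonneg[of V] hs_norm2_nonneg[of W]
    unfolding u_def v_def w_def by auto
  have unit: "hs_norm2 (\<lambda>i j. complex_of_real (1 / r) * X i j) \<le> 1" if "r = sqrt (hs_norm2 X)" "r > 0"
    for r and X :: "'a mat"
    unfolding hs_norm2_scale using that hs_norm2_nonneg[of X] by (simp add: norm_divide power_divide)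
  have "cmod (tensor_pairing T U V W) / (u * v * w)
      = cmod (tensor_pairing T (\<lambda>i j. complex_of_real (1 / u) * U i j)
          (\<lambda>i j. complex_of_real (1 / v) * V i j) (\<lambda>i j. complex_of_real (1 / w) * W i j))"
    unfolding tensor_pairing_scale using pos by (simp add: norm_mult norm_divide)
  also have "\<dots> \<le> norm_3eps T"
    by (intro norm_tensor_pairing_le_norm_3eps unit) (use pos in \<open>auto simp: u_def v_def w_def\<close>)
  finally show ?thesis
    using pos by (simp add: u_def v_def w_def field_simps)
qed

definition conj_basis_sum :: "('n::finite) mat set \<Rightarrow> ('n mat \<Rightarrow> complex) \<Rightarrow> 'n mat" where
  "conj_basis_sum S a = (\<lambda>i j. \<Sum>P\<in>S. a P * mat_cnj P i j)"

lemma hs_norm2_conj_basis_sum: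
  fixes S :: "('n::finite) mat set"
  assumes "pauli_like_basis S"
  shows "hs_norm2 (conj_basis_sum S a) = real CARD('n) * (\<Sum>P\<in>S. (cmod (a P))^2)"
proof -
  have fin: "finite S" using assms by (simp add: pauli_like_basis_def)
  have "complex_of_real (hs_norm2 (conj_basis_sum S a))
      = (\<Sum>i\<in>UNIV. \<Sum>j\<in>UNIV. \<Sum>P\<in>S. \<Sum>Q\<in>S. cnj (a P) * a Q * (cnj (Q i j) * P i j))"
    unfolding hs_norm2_def of_real_sum complex_norm_square conj_basis_sum_def mat_cnj_def
    by (simp add: cnj_sum sum_distrib_left sum_distrib_right mult_ac)
  also have "\<dots> = (\<Sum>P\<in>S. \<Sum>Q\<in>S. cnj (a P) * a Q * hs_inner Q P)"
    unfolding hs_inner_def by (simp only: sum.swap[of _ UNIV S] sum_distrib_left)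
  also have "\<dots> = (\<Sum>P\<in>S. cnj (a P) * a P * of_nat CARD('n))"
  proof (rule sum.cong[OF refl])
    fix P assume P: "P \<in> S"
    have "(\<Sum>Q\<in>S. cnj (a P) * a Q * hs_inner Q P) = (\<Sum>Q\<in>S. if Q = P then cnj (a P) * a P * of_nat CARD('n) else 0)"
      by (intro sum.cong) (auto simp: pauli_like_basis_hs_inner[OF assms _ P])
    then show "(\<Sum>Q\<in>S. cnj (a P) * a Q * hs_inner Q P) = cnj (a P) * a P * of_nat CARD('n)"
      using fin P by simp
  qed
  also have "\<dots> = of_nat CARD('n) * (\<Sum>P\<in>S. a P * cnj (a P))"
    by (simp add: sum_distrib_left mult_ac)
  also have "\<dots> = complex_of_real (real CARD('n) * (\<Sum>P\<in>S. (cmod (a P))^2))"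
    unfolding of_real_mult of_real_sum complex_norm_square by simp
  finally show ?thesis
    using of_real_eq_iff by blast
qed

lemma hs_norm2_conj_basis_sum_signs:
  fixes S :: "('n::finite) mat set"
  assumes "pauli_like_basis S" "\<forall>P\<in>S. a P \<in> {-1, 1}"
  shows "hs_norm2 (conj_basis_sum S (\<lambda>P. complex_of_real (a P))) = real CARD('n) ^ 3"
proof -
  have "(\<Sum>P\<in>S. (cmod (complex_of_real (a P)))^2) = (\<Sum>P\<in>S. 1)"
    using assms(2) by (intro sum.cong) auto
  then show ?thesis
    using assms(1) by (simp add: hs_norm2_conj_basis_sum pauli_like_basis_def power3_eq_cube power2_eq_square)
qed

lemma game_pi_mult_game_sign:
  "game_pi T S P Q R * game_sign T P Q R = coeffG T P Q R / normZ T S"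
  unfolding game_pi_def game_sign_def by (auto simp: abs_if)

lemma game_value_eq_Re_tensor_pairing:
  "(\<Sum>P\<in>S. \<Sum>Q\<in>S. \<Sum>R\<in>S. game_pi T S P Q R * game_sign T P Q R * a P * b Q * c R)
   = Re (tensor_pairing T (conj_basis_sum S (\<lambda>P. complex_of_real (a P)))
          (conj_basis_sum S (\<lambda>Q. complex_of_real (b Q))) (conj_basis_sum S (\<lambda>R. complex_of_real (c R))))
     / normZ T S"
proof -
  have "game_pi T S P Q R * game_sign T P Q R * a P * b Q * c R
      = Re (complex_of_real (a P) * complex_of_real (b Q) * complex_of_real (c R)
          * tensor_pairing T (mat_cnj P) (mat_cnj Q) (mat_cnj R)) / normZ T S" for P Q R
    by (simp add: game_pi_mult_game_sign coeffG_eq_Re_tensor_pairing)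
  then have "(\<Sum>P\<in>S. \<Sum>Q\<in>S. \<Sum>R\<in>S. game_pi T S P Q R * game_sign T P Q R * a P * b Q * c R)
    = Re (\<Sum>P\<in>S. \<Sum>Q\<in>S. \<Sum>R\<in>S. complex_of_real (a P) * complex_of_real (b Q) * complex_of_real (c R)
          * tensor_pairing T (mat_cnj P) (mat_cnj Q) (mat_cnj R)) / normZ T S"
    by (simp add: Re_sum sum_divide_distrib)
  then show ?thesis
    by (simp only: tensor_pairing_sum conj_basis_sum_def)
qed

lemma sqrt_power3_cube:
  fixes x :: real
  assumes "x > 0"
  shows "sqrt (x ^ 3) ^ 3 = x powr (9/2)"
proof -
  have "sqrt (x ^ 3) ^ 3 = sqrt x ^ 9"
    by (simp add: real_sqrt_power flip: power_mult)
  also have "\<dots> = (x powr (1/2)) powr 9"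
    using assms by (simp add: powr_half_sqrt powr_realpow[of _ 9, simplified])
  also have "\<dots> = x powr (9/2)"
    by (simp add: powr_powr)
  finally show ?thesis .
qed

lemma classical_bias_le:
  fixes T :: "('n::finite) tensor6" and S :: "'n mat set"
  assumes basis: "pauli_like_basis S" and Z_pos: "normZ T S > 0"
  shows "classical_bias S S S (game_pi T S) (game_sign T) \<le> real CARD('n) powr (9/2) * norm_3eps T / normZ T S"
  unfolding classical_bias_def
proof (rule cSup_least, goal_cases)
  case 1
  show ?case by (auto intro!: exI[of _ "\<lambda>_. 1"])
next
  case (2 v)
  then obtain a b c where v: "v = \<bar>\<Sum>P\<in>S. \<Sum>Q\<in>S. \<Sum>R\<in>S. game_pi T S P Q R * game_sign T P Q R * a P * b Q * c R\<bar>"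
    and signs: "\<forall>P\<in>S. a P \<in> {-1, 1}" "\<forall>P\<in>S. b P \<in> {-1, 1}" "\<forall>P\<in>S. c P \<in> {-1, 1}"
    by blast
  let ?U = "conj_basis_sum S (\<lambda>P. complex_of_real (a P))"
  let ?V = "conj_basis_sum S (\<lambda>P. complex_of_real (b P))"
  let ?W = "conj_basis_sum S (\<lambda>P. complex_of_real (c P))"
  define r where "r = sqrt (real CARD('n) ^ 3)"
  have norms: "sqrt (hs_norm2 ?U) = r" "sqrt (hs_norm2 ?V) = r" "sqrt (hs_norm2 ?W) = r"
    unfolding r_def by (simp_all only: hs_norm2_conj_basis_sum_signs[OF basis signs(1)]
      hs_norm2_conj_basis_sum_signs[OF basis signs(2)] hs_norm2_conj_basis_sum_signs[OF basis signs(3)])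
  have "v = \<bar>Re (tensor_pairing T ?U ?V ?W)\<bar> / normZ T S"
    using Z_pos by (simp add: v game_value_eq_Re_tensor_pairing)
  also have "\<dots> \<le> cmod (tensor_pairing T ?U ?V ?W) / normZ T S"
    using Z_pos by (intro divide_right_mono abs_Re_le_cmod) auto
  also have "\<dots> \<le> r ^ 3 * norm_3eps T / normZ T S"
    using Z_pos norm_tensor_pairing_le[of T ?U ?V ?W]
    unfolding norms power3_eq_cube by (simp add: divide_right_mono)
  also have "r ^ 3 = real CARD('n) powr (9/2)"
    unfolding r_def by (simp add: sqrt_power3_cube)
  finally show ?case .
qed

section \<open>Quantum strategies\<close>

lemma observable_preserves_norm2:
  assumes "observable d A"
  shows "(\<Sum>a<d. (cmod (\<Sum>a'<d. A a a' * v a'))^2) = (\<Sum>a<d. (cmod (v a))^2)"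
proof -
  have herm: "cnj (A a b) = A b a" if "a < d" "b < d" for a b
    using assms that unfolding observable_def by (metis complex_cnj_cnj)
  have square: "(\<Sum>e<d. A a e * A e b) = (if a = b then 1 else 0)" if "a < d" "b < d" for a b
    using assms that unfolding observable_def by blast
  have "complex_of_real (\<Sum>a<d. (cmod (\<Sum>a'<d. A a a' * v a'))^2)
      = (\<Sum>a<d. cnj (\<Sum>a'<d. A a a' * v a') * (\<Sum>a''<d. A a a'' * v a''))"
    unfolding of_real_sum complex_norm_square by (simp add: mult.commute)
  also have "\<dots> = (\<Sum>a<d. \<Sum>a'<d. \<Sum>a''<d. cnj (v a') * v a'' * (A a' a * A a a''))"
    by (intro sum.cong refl) (simp add: cnj_sum sum_distrib_left sum_distrib_right herm mult_ac)
  also have "\<dots> = (\<Sum>a'<d. \<Sum>a''<d. cnj (v a') * v a'' * (\<Sum>a<d. A a' a * A a a''))"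
    by (subst sum_swap_inside_2) (simp add: sum_distrib_left)
  also have "\<dots> = (\<Sum>a'<d. \<Sum>a''<d. if a'' = a' then cnj (v a') * v a' else 0)"
    by (intro sum.cong refl) (auto simp: square)
  also have "\<dots> = complex_of_real (\<Sum>a<d. (cmod (v a))^2)"
    unfolding of_real_sum complex_norm_square by (simp add: mult.commute)
  finally show ?thesis
    using of_real_eq_iff by blast
qed

lemma observables_preserve_norm2_3:
  assumes "observable d A" "observable d B" "observable d C"
  shows "(\<Sum>a<d. \<Sum>b<d. \<Sum>c<d. (cmod (\<Sum>a'<d. A a a' * (\<Sum>b'<d. B b b' * (\<Sum>c'<d. C c c' * psi a' b' c'))))^2)
    = (\<Sum>a<d. \<Sum>b<d. \<Sum>c<d. (cmod (psi a b c))^2)"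
proof -
  define p3 where "p3 = (\<lambda>a b c. \<Sum>c'<d. C c c' * psi a b c')"
  define p2 where "p2 = (\<lambda>a b c. \<Sum>b'<d. B b b' * p3 a b' c)"
  have "(\<Sum>a<d. \<Sum>b<d. \<Sum>c<d. (cmod (\<Sum>a'<d. A a a' * p2 a' b c))^2)
      = (\<Sum>b<d. \<Sum>c<d. \<Sum>a<d. (cmod (\<Sum>a'<d. A a a' * p2 a' b c))^2)"
    by (rule sum_swap_inside_2)
  also have "\<dots> = (\<Sum>b<d. \<Sum>c<d. \<Sum>a<d. (cmod (p2 a b c))^2)"
    by (simp add: observable_preserves_norm2[OF assms(1)])
  also have "\<dots> = (\<Sum>a<d. \<Sum>b<d. \<Sum>c<d. (cmod (p2 a b c))^2)"
    by (rule sum_swap_inside_2[symmetric])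
  also have "\<dots> = (\<Sum>a<d. \<Sum>c<d. \<Sum>b<d. (cmod (p2 a b c))^2)"
    by (rule sum.cong[OF refl], rule sum.swap)
  also have "\<dots> = (\<Sum>a<d. \<Sum>c<d. \<Sum>b<d. (cmod (p3 a b c))^2)"
    unfolding p2_def by (simp add: observable_preserves_norm2[OF assms(2)])
  also have "\<dots> = (\<Sum>a<d. \<Sum>b<d. \<Sum>c<d. (cmod (p3 a b c))^2)"
    by (rule sum.cong[OF refl], rule sum.swap)
  also have "\<dots> = (\<Sum>a<d. \<Sum>b<d. \<Sum>c<d. (cmod (psi a b c))^2)"
    unfolding p3_def by (simp add: observable_preserves_norm2[OF assms(3)])
  finally show ?thesis
    unfolding p2_def p3_def .
qed

lemma norm_expect3_le_1:
  assumes "unit_state3 d psi" "observable d A" "observable d B" "observable d C"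
  shows "cmod (expect3 d psi A B C) \<le> 1"
proof -
  define \<phi> where "\<phi> = (\<lambda>a b c. \<Sum>a'<d. A a a' * (\<Sum>b'<d. B b b' * (\<Sum>c'<d. C c c' * psi a' b' c')))"
  have "expect3 d psi A B C = (\<Sum>a<d. \<Sum>b<d. \<Sum>c<d. cnj (psi a b c) * \<phi> a b c)"
    unfolding expect3_def \<phi>_def by (simp add: sum_distrib_left mult_ac)
  also have "cmod \<dots> \<le> (\<Sum>a<d. \<Sum>b<d. \<Sum>c<d. ((cmod (psi a b c))^2 + (cmod (\<phi> a b c))^2) / 2)"
  proof (intro sum_norm_le)
    fix a b c
    show "cmod (cnj (psi a b c) * \<phi> a b c) \<le> ((cmod (psi a b c))^2 + (cmod (\<phi> a b c))^2) / 2"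
      using sum_squares_bound[of "cmod (psi a b c)" "cmod (\<phi> a b c)"] by (simp add: norm_mult power2_eq_square)
  qed
  also have "\<dots> = 1"
    using assms observables_preserve_norm2_3[OF assms(2-4), of psi]
    unfolding unit_state3_def \<phi>_def by (simp add: sum.distrib sum_divide_distrib[symmetric])
  finally show ?thesis .
qed

lemma bdd_above_entangled_values:
  "bdd_above {cmod (\<Sum>x\<in>X. \<Sum>y\<in>Y. \<Sum>z\<in>Z'. complex_of_real (q x y z * s x y z) * expect3 d psi (A x) (B y) (C z))
      | d psi A B C. unit_state3 d psi \<and> (\<forall>x\<in>X. observable d (A x))
          \<and> (\<forall>y\<in>Y. observable d (B y)) \<and> (\<forall>z\<in>Z'. observable d (C z))}"
proof (rule bdd_aboveI, safe)
  fix d psi A B C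
  assume "unit_state3 d psi" "\<forall>x\<in>X. observable d (A x)" "\<forall>y\<in>Y. observable d (B y)" "\<forall>z\<in>Z'. observable d (C z)"
  then have "cmod (complex_of_real (q x y z * s x y z) * expect3 d psi (A x) (B y) (C z)) \<le> \<bar>q x y z * s x y z\<bar>"
    if "x \<in> X" "y \<in> Y" "z \<in> Z'" for x y z
    using that norm_expect3_le_1[of d psi "A x" "B y" "C z"]
      mult_left_le[of "cmod (expect3 d psi (A x) (B y) (C z))" "\<bar>q x y z * s x y z\<bar>"]
    by (simp add: norm_mult abs_mult)
  then show "cmod (\<Sum>x\<in>X. \<Sum>y\<in>Y. \<Sum>z\<in>Z'. complex_of_real (q x y z * s x y z) * expect3 d psi (A x) (B y) (C z))
      \<le> (\<Sum>x\<in>X. \<Sum>y\<in>Y. \<Sum>z\<in>Z'. \<bar>q x y z * s x y z\<bar>)"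
    by (intro sum_norm_le) auto
qed

section \<open>Hermitian kernels and their numerical radius\<close>

definition vec_inner :: "('a::finite \<Rightarrow> complex) \<Rightarrow> ('a \<Rightarrow> complex) \<Rightarrow> complex" where
  "vec_inner x y = (\<Sum>t\<in>UNIV. cnj (x t) * y t)"

definition vec_norm2 :: "('a::finite \<Rightarrow> complex) \<Rightarrow> real" where
  "vec_norm2 x = (\<Sum>t\<in>UNIV. (cmod (x t))^2)"

definition kernel_apply :: "('a::finite \<Rightarrow> 'a \<Rightarrow> complex) \<Rightarrow> ('a \<Rightarrow> complex) \<Rightarrow> 'a \<Rightarrow> complex" where
  "kernel_apply M x = (\<lambda>s. \<Sum>t\<in>UNIV. M s t * x t)"

definition hermitian_kernel :: "('a::finite \<Rightarrow> 'a \<Rightarrow> complex) \<Rightarrow> bool" where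
  "hermitian_kernel M \<longleftrightarrow> (\<forall>s t. M s t = cnj (M t s))"

lemma vec_inner_self: "vec_inner x x = complex_of_real (vec_norm2 x)"
  unfolding vec_inner_def vec_norm2_def of_real_sum complex_norm_square by (simp add: mult.commute)

lemma vec_norm2_nonneg: "vec_norm2 x \<ge> 0"
  unfolding vec_norm2_def by (simp add: sum_nonneg)

lemma vec_norm2_eq_0_iff: "vec_norm2 x = 0 \<longleftrightarrow> x = (\<lambda>_. 0)"
  unfolding vec_norm2_def by (simp add: sum_nonneg_eq_0_iff fun_eq_iff)

lemma vec_norm2_indicator: "vec_norm2 (\<lambda>t::'a::finite. if t = u then 1 else 0) = 1"
proof -
  have "(cmod (if t = u then 1 else 0))^2 = (if t = u then 1 else (0::real))" for t :: 'a
    by simp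
  then show ?thesis
    unfolding vec_norm2_def by simp
qed

lemma vec_norm2_scale: "vec_norm2 (\<lambda>t. c * x t) = (cmod c)^2 * vec_norm2 x"
  unfolding vec_norm2_def by (simp add: sum_distrib_left norm_mult power_mult_distrib)

lemma vec_inner_add_left: "vec_inner (\<lambda>t. x t + y t) z = vec_inner x z + vec_inner y z"
  unfolding vec_inner_def by (simp add: algebra_simps sum.distrib)

lemma vec_inner_add_right: "vec_inner z (\<lambda>t. x t + y t) = vec_inner z x + vec_inner z y"
  unfolding vec_inner_def by (simp add: algebra_simps sum.distrib)

lemma vec_inner_diff_left: "vec_inner (\<lambda>t. x t - y t) z = vec_inner x z - vec_inner y z"
  unfolding vec_inner_def by (simp add: algebra_simps sum_subtractf)

lemma vec_inner_diff_right: "vec_inner z (\<lambda>t. x t - y t) = vec_inner z x - vec_inner z y"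
  unfolding vec_inner_def by (simp add: algebra_simps sum_subtractf)

lemma vec_inner_scale_left: "vec_inner (\<lambda>t. c * x t) z = cnj c * vec_inner x z"
  unfolding vec_inner_def by (simp add: algebra_simps sum_distrib_left)

lemma vec_inner_scale_right: "vec_inner z (\<lambda>t. c * x t) = c * vec_inner z x"
  unfolding vec_inner_def by (simp add: algebra_simps sum_distrib_left)

lemma kernel_apply_add: "kernel_apply M (\<lambda>t. x t + y t) = (\<lambda>s. kernel_apply M x s + kernel_apply M y s)"
  unfolding kernel_apply_def by (simp add: algebra_simps sum.distrib)

lemma kernel_apply_diff: "kernel_apply M (\<lambda>t. x t - y t) = (\<lambda>s. kernel_apply M x s - kernel_apply M y s)"
  unfolding kernel_apply_def by (simp add: algebra_simps sum_subtractf)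

lemma kernel_apply_scale: "kernel_apply M (\<lambda>t. c * x t) = (\<lambda>s. c * kernel_apply M x s)"
  unfolding kernel_apply_def by (simp add: sum_distrib_left mult_ac)

lemma vec_inner_kernel_apply_hermitian:
  assumes "hermitian_kernel M"
  shows "vec_inner x (kernel_apply M y) = cnj (vec_inner y (kernel_apply M x))"
proof -
  have cnj_M: "cnj (M s t) = M t s" for s t
    using assms unfolding hermitian_kernel_def by (metis complex_cnj_cnj)
  have "cnj (vec_inner y (kernel_apply M x)) = (\<Sum>s\<in>UNIV. \<Sum>t\<in>UNIV. y s * M t s * cnj (x t))"
    unfolding vec_inner_def kernel_apply_def by (simp add: cnj_sum sum_distrib_left mult_ac cnj_M)
  also have "\<dots> = (\<Sum>t\<in>UNIV. \<Sum>s\<in>UNIV. y s * M t s * cnj (x t))"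
    by (rule sum.swap)
  also have "\<dots> = vec_inner x (kernel_apply M y)"
    unfolding vec_inner_def kernel_apply_def sum_distrib_left by (intro sum.cong refl) (simp add: mult_ac)
  finally show ?thesis by (rule sym)
qed

lemma vec_norm2_parallelogram:
  "vec_norm2 (\<lambda>t. x t + y t) + vec_norm2 (\<lambda>t. x t - y t) = 2 * vec_norm2 x + 2 * vec_norm2 y"
proof -
  have "complex_of_real (vec_norm2 (\<lambda>t. x t + y t) + vec_norm2 (\<lambda>t. x t - y t))
      = complex_of_real (2 * vec_norm2 x + 2 * vec_norm2 y)"
    unfolding of_real_add of_real_mult vec_inner_self[symmetric]
      vec_inner_add_left vec_inner_add_right vec_inner_diff_left vec_inner_diff_right
    by (simp add: algebra_simps)
  then show ?thesis
    using of_real_eq_iff by blast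
qed

lemma quadratic_form_polarization:
  "vec_inner (\<lambda>t. x t + y t) (kernel_apply M (\<lambda>t. x t + y t))
     - vec_inner (\<lambda>t. x t - y t) (kernel_apply M (\<lambda>t. x t - y t))
   = 2 * (vec_inner x (kernel_apply M y) + vec_inner y (kernel_apply M x))"
  unfolding kernel_apply_add kernel_apply_diff vec_inner_add_left vec_inner_add_right
    vec_inner_diff_left vec_inner_diff_right
  by (simp add: algebra_simps)

lemma quadratic_form_le_numerical_radius:
  assumes "\<And>z. vec_norm2 z = 1 \<Longrightarrow> cmod (vec_inner z (kernel_apply M z)) \<le> K"
  shows "cmod (vec_inner x (kernel_apply M x)) \<le> K * vec_norm2 x"
proof (cases "vec_norm2 x = 0")
  case True
  then have "x = (\<lambda>_. 0)"
    by (simp only: vec_norm2_eq_0_iff)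
  then show ?thesis
    by (simp add: vec_inner_def vec_norm2_def)
next
  case False
  define r where "r = sqrt (vec_norm2 x)"
  have r: "r > 0" "r^2 = vec_norm2 x"
    using False vec_norm2_nonneg[of x] unfolding r_def by auto
  have "vec_norm2 (\<lambda>t. complex_of_real (1 / r) * x t) = 1"
    unfolding vec_norm2_scale using r False by (simp add: norm_divide power_divide)
  then have "cmod (vec_inner (\<lambda>t. complex_of_real (1 / r) * x t) (kernel_apply M (\<lambda>t. complex_of_real (1 / r) * x t))) \<le> K"
    by (rule assms)
  then show ?thesis
    unfolding kernel_apply_scale vec_inner_scale_left vec_inner_scale_right
    using r by (simp add: norm_mult norm_divide field_simps power2_eq_square)
qed

lemma norm_kernel_apply_le_of_quadratic_form_le:
  assumes herm: "hermitian_kernel M" and K: "K \<ge> 0"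
    and quadratic: "\<And>z. cmod (vec_inner z (kernel_apply M z)) \<le> K * vec_norm2 z"
    and x: "vec_norm2 x \<le> 1"
  shows "sqrt (vec_norm2 (kernel_apply M x)) \<le> K"
proof (cases "vec_norm2 (kernel_apply M x) = 0")
  case True
  then show ?thesis using K by simp
next
  case False
  \<comment> \<open>Polarize with y the unit vector along Mx: then Re of the polarization identity is 4|Mx|.\<close>
  define m where "m = sqrt (vec_norm2 (kernel_apply M x))"
  have m: "m > 0" "m^2 = vec_norm2 (kernel_apply M x)"
    using False vec_norm2_nonneg[of "kernel_apply M x"] unfolding m_def by auto
  define y where "y = (\<lambda>t. complex_of_real (1 / m) * kernel_apply M x t)"
  have y: "vec_norm2 y = 1"
    unfolding y_def vec_norm2_scale using m False by (simp add: norm_divide power_divide)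
  have yMx: "vec_inner y (kernel_apply M x) = complex_of_real m"
    unfolding y_def vec_inner_scale_left vec_inner_self m(2)[symmetric] using m(1) by (simp add: power2_eq_square)
  then have xMy: "vec_inner x (kernel_apply M y) = complex_of_real m"
    using vec_inner_kernel_apply_hermitian[OF herm, of x y] by simp
  let ?plus = "vec_inner (\<lambda>t. x t + y t) (kernel_apply M (\<lambda>t. x t + y t))"
  let ?minus = "vec_inner (\<lambda>t. x t - y t) (kernel_apply M (\<lambda>t. x t - y t))"
  have "4 * m = Re (?plus - ?minus)"
    unfolding quadratic_form_polarization xMy yMx by simp
  also have "\<dots> \<le> cmod ?plus + cmod ?minus"
    using complex_Re_le_cmod[of ?plus] abs_Re_le_cmod[of ?minus] by simp
  also have "\<dots> \<le> K * vec_norm2 (\<lambda>t. x t + y t) + K * vec_norm2 (\<lambda>t. x t - y t)"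
    by (intro add_mono quadratic)
  also have "\<dots> = K * (2 * vec_norm2 x + 2 * vec_norm2 y)"
    by (simp only: distrib_left[symmetric] vec_norm2_parallelogram)
  also have "\<dots> \<le> K * 4"
    using x y K by (intro mult_left_mono) auto
  finally show ?thesis
    unfolding m_def by simp
qed

lemma norm_kernel_apply_le_numerical_radius:
  assumes herm: "hermitian_kernel M"
    and radius: "\<And>z. vec_norm2 z = 1 \<Longrightarrow> cmod (vec_inner z (kernel_apply M z)) \<le> K"
    and x: "vec_norm2 x \<le> 1"
  shows "sqrt (vec_norm2 (kernel_apply M x)) \<le> K"
proof (rule norm_kernel_apply_le_of_quadratic_form_le[OF herm _ _ x])
  show "K \<ge> 0"
    using radius[OF vec_norm2_indicator] norm_ge_zero order_trans by blast
  show "cmod (vec_inner z (kernel_apply M z)) \<le> K * vec_norm2 z" for z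
    using radius by (rule quadratic_form_le_numerical_radius)
qed

section \<open>The operator norm and the entangled bias\<close>

fun tensor_kernel :: "('n::finite) tensor6 \<Rightarrow> 'n \<times> 'n \<times> 'n \<Rightarrow> 'n \<times> 'n \<times> 'n \<Rightarrow> complex" where
  "tensor_kernel T (i, j, k) (i', j', k') = T i i' j j' k k'"

lemma hermitian_tensor_kernel:
  assumes "tensor_hermitian T"
  shows "hermitian_kernel (tensor_kernel T)"
  using assms unfolding hermitian_kernel_def split_paired_All tensor_kernel.simps tensor_hermitian_def
  by blast

lemma norm_2eps_eq_Sup_kernel_apply:
  "norm_2eps T = Sup {sqrt (vec_norm2 (kernel_apply (tensor_kernel T) x)) | x. vec_norm2 x \<le> 1}"
proof -
  have norm: "vec_norm2 x = (\<Sum>i\<in>UNIV. \<Sum>j\<in>UNIV. \<Sum>k\<in>UNIV. (cmod (x (i, j, k)))^2)" for x :: "'a \<times> 'a \<times> 'a \<Rightarrow> complex"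
    by (simp add: vec_norm2_def sum_UNIV_triple)
  have kernel: "vec_norm2 (kernel_apply (tensor_kernel T) x) = (\<Sum>i\<in>UNIV. \<Sum>j\<in>UNIV. \<Sum>k\<in>UNIV.
      (cmod (\<Sum>i'\<in>UNIV. \<Sum>j'\<in>UNIV. \<Sum>k'\<in>UNIV. T i i' j j' k k' * x (i', j', k')))^2)" for x
    unfolding vec_norm2_def kernel_apply_def sum_UNIV_triple by simp
  show ?thesis
    unfolding norm_2eps_def kernel unfolding norm
  proof (rule arg_cong[of _ _ Sup], safe, goal_cases)
    case (1 v u)
    then show ?case
      by (intro exI[of _ "\<lambda>(i, j, k). u i j k"]) simp
  next
    case (2 v x)
    then show ?case
      by (intro exI[of _ "\<lambda>i j k. x (i, j, k)"]) simp
  qed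
qed

lemma norm_2eps_bounds:
  fixes T :: "('n::finite) tensor6"
  assumes "tensor_hermitian T"
    and "\<And>z. vec_norm2 z = 1 \<Longrightarrow> cmod (vec_inner z (kernel_apply (tensor_kernel T) z)) \<le> K"
  shows "0 \<le> norm_2eps T" and "norm_2eps T \<le> K"
proof -
  have bound: "sqrt (vec_norm2 (kernel_apply (tensor_kernel T) x)) \<le> K" if "vec_norm2 x \<le> 1" for x
    by (rule norm_kernel_apply_le_numerical_radius[OF hermitian_tensor_kernel[OF assms(1)] assms(2) that])
  have zero: "0 \<in> {sqrt (vec_norm2 (kernel_apply (tensor_kernel T) x)) | x. vec_norm2 x \<le> 1}"
    by (rule CollectI, rule exI[of _ "\<lambda>_. 0"]) (simp add: vec_norm2_def kernel_apply_def)
  show "0 \<le> norm_2eps T"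
    unfolding norm_2eps_eq_Sup_kernel_apply
    by (rule cSup_upper[OF zero], rule bdd_aboveI) (use bound in blast)
  show "norm_2eps T \<le> K"
    unfolding norm_2eps_eq_Sup_kernel_apply
    by (rule cSup_least) (use zero bound in blast)+
qed

lemma sum_lessThan_reindex_bij:
  assumes "bij_betw f {..<n} (UNIV :: 'a set)"
  shows "(\<Sum>a<n. h a) = (\<Sum>i\<in>UNIV. h (inv_into {..<n} f i))"
  using sum.reindex_bij_betw[OF bij_betw_inv_into[OF assms], of h] by simp

lemma observable_of_hermitian_involution:
  fixes P :: "('n::finite) mat"
  assumes f: "bij_betw f {..<CARD('n)} UNIV" and "mat_hermitian P" "mat_mult P P = mat_id"
  shows "observable CARD('n) (\<lambda>a b. P (f a) (f b))"
  unfolding observable_def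
proof safe
  fix a b assume ab: "a < CARD('n)" "b < CARD('n)"
  show "P (f a) (f b) = cnj (P (f b) (f a))"
    using assms(2) unfolding mat_hermitian_def by blast
  have "(\<Sum>e<CARD('n). P (f a) (f e) * P (f e) (f b)) = mat_mult P P (f a) (f b)"
    unfolding mat_mult_def sum_lessThan_reindex_bij[OF f] by (simp add: bij_betw_inv_into_right[OF f])
  also have "\<dots> = (if a = b then 1 else 0)"
    using assms(3) f ab by (auto simp: mat_id_def bij_betw_def inj_on_def)
  finally show "(\<Sum>e<CARD('n). P (f a) (f e) * P (f e) (f b)) = (if a = b then 1 else 0)" .
qed

lemma unit_state3_reindex:
  assumes f: "bij_betw f {..<CARD('n::finite)} (UNIV :: 'n set)"
  shows "unit_state3 CARD('n) (\<lambda>a b c. psi (f a, f b, f c)) \<longleftrightarrow> vec_norm2 psi = 1"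
  unfolding unit_state3_def vec_norm2_def sum_UNIV_triple sum_lessThan_reindex_bij[OF f]
  by (simp add: bij_betw_inv_into_right[OF f])

lemma expect3_reindex:
  fixes P Q R :: "('n::finite) mat"
  assumes f: "bij_betw f {..<CARD('n)} (UNIV :: 'n set)"
  shows "expect3 CARD('n) (\<lambda>a b c. psi (f a, f b, f c)) (\<lambda>a b. P (f a) (f b)) (\<lambda>a b. Q (f a) (f b)) (\<lambda>a b. R (f a) (f b))
    = (\<Sum>i\<in>UNIV. \<Sum>j\<in>UNIV. \<Sum>k\<in>UNIV. \<Sum>i'\<in>UNIV. \<Sum>j'\<in>UNIV. \<Sum>k'\<in>UNIV.
        P i i' * Q j j' * R k k' * (cnj (psi (i, j, k)) * psi (i', j', k')))"
  unfolding expect3_def sum_lessThan_reindex_bij[OF f]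
  by (simp add: bij_betw_inv_into_right[OF f] mult_ac)

lemma game_value_of_basis_observables:
  fixes T :: "('n::finite) tensor6" and S :: "'n mat set"
  assumes basis: "pauli_like_basis S" and herm: "tensor_hermitian T"
  shows "(\<Sum>P\<in>S. \<Sum>Q\<in>S. \<Sum>R\<in>S. complex_of_real (game_pi T S P Q R * game_sign T P Q R) *
      (\<Sum>i\<in>UNIV. \<Sum>j\<in>UNIV. \<Sum>k\<in>UNIV. \<Sum>i'\<in>UNIV. \<Sum>j'\<in>UNIV. \<Sum>k'\<in>UNIV.
        P i i' * Q j j' * R k k' * (cnj (psi (i, j, k)) * psi (i', j', k'))))
    = complex_of_real (real CARD('n) ^ 3 / normZ T S) * vec_inner psi (kernel_apply (tensor_kernel T) psi)"
  (is "?value = _")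
proof -
  have weight: "complex_of_real (game_pi T S P Q R * game_sign T P Q R)
      = tensor_pairing T (mat_cnj P) (mat_cnj Q) (mat_cnj R) / complex_of_real (normZ T S)"
    if "P \<in> S" "Q \<in> S" "R \<in> S" for P Q R
    using basis that unfolding pauli_like_basis_def
    by (simp add: game_pi_mult_game_sign of_real_coeffG[OF herm, symmetric])
  have "?value = (\<Sum>P\<in>S. \<Sum>Q\<in>S. \<Sum>R\<in>S. \<Sum>i\<in>UNIV. \<Sum>j\<in>UNIV. \<Sum>k\<in>UNIV. \<Sum>i'\<in>UNIV. \<Sum>j'\<in>UNIV. \<Sum>k'\<in>UNIV.
      P i i' * Q j j' * R k k' * tensor_pairing T (mat_cnj P) (mat_cnj Q) (mat_cnj R)
        * (cnj (psi (i, j, k)) * psi (i', j', k') / complex_of_real (normZ T S)))"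
    by (intro sum.cong refl) (simp only: weight, simp add: sum_distrib_left mult_ac)
  also have "\<dots> = (\<Sum>i\<in>UNIV. \<Sum>j\<in>UNIV. \<Sum>k\<in>UNIV. \<Sum>i'\<in>UNIV. \<Sum>j'\<in>UNIV. \<Sum>k'\<in>UNIV.
      (\<Sum>P\<in>S. \<Sum>Q\<in>S. \<Sum>R\<in>S. P i i' * Q j j' * R k k' * tensor_pairing T (mat_cnj P) (mat_cnj Q) (mat_cnj R))
        * (cnj (psi (i, j, k)) * psi (i', j', k') / complex_of_real (normZ T S)))"
    by (simp only: sum.swap[of _ S UNIV] sum_distrib_right)
  also have "\<dots> = (\<Sum>i\<in>UNIV. \<Sum>j\<in>UNIV. \<Sum>k\<in>UNIV. \<Sum>i'\<in>UNIV. \<Sum>j'\<in>UNIV. \<Sum>k'\<in>UNIV.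
      complex_of_real (real CARD('n) ^ 3 / normZ T S) * (cnj (psi (i, j, k)) * (T i i' j j' k k' * psi (i', j', k'))))"
    by (simp only: pauli_like_basis_expansion[OF basis]) (simp add: mult_ac divide_inverse)
  also have "\<dots> = complex_of_real (real CARD('n) ^ 3 / normZ T S) * vec_inner psi (kernel_apply (tensor_kernel T) psi)"
    unfolding vec_inner_def kernel_apply_def sum_UNIV_triple sum_distrib_left by simp
  finally show ?thesis .
qed

lemma entangled_bias_ge_quadratic_form:
  fixes T :: "('n::finite) tensor6" and S :: "'n mat set"
  assumes basis: "pauli_like_basis S" and herm: "tensor_hermitian T" and Z_pos: "normZ T S > 0"
    and psi: "vec_norm2 psi = 1"
  shows "real CARD('n) ^ 3 / normZ T S * cmod (vec_inner psi (kernel_apply (tensor_kernel T) psi))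
    \<le> entangled_bias S S S (game_pi T S) (game_sign T)"
proof -
  obtain f :: "nat \<Rightarrow> 'n" where f: "bij_betw f {..<CARD('n)} UNIV"
    using finite_same_card_bij[of "{..<CARD('n)}" "UNIV :: 'n set"] by auto
  let ?psi = "\<lambda>a b c. psi (f a, f b, f c)"
  let ?obs = "\<lambda>P a b. P (f a) (f b)"
  have unit: "unit_state3 CARD('n) ?psi"
    using psi by (simp add: unit_state3_reindex[OF f])
  have obs: "\<forall>P\<in>S. observable CARD('n) (?obs P)"
    using basis f by (auto simp: pauli_like_basis_def intro: observable_of_hermitian_involution)
  have "real CARD('n) ^ 3 / normZ T S * cmod (vec_inner psi (kernel_apply (tensor_kernel T) psi))
      = cmod (\<Sum>P\<in>S. \<Sum>Q\<in>S. \<Sum>R\<in>S. complex_of_real (game_pi T S P Q R * game_sign T P Q R)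
          * expect3 CARD('n) ?psi (?obs P) (?obs Q) (?obs R))"
    using Z_pos
    by (simp only: expect3_reindex[OF f] game_value_of_basis_observables[OF basis herm] norm_mult norm_of_real)
      (simp add: Z_pos abs_of_pos)
  also have "\<dots> \<le> entangled_bias S S S (game_pi T S) (game_sign T)"
    unfolding entangled_bias_def
    by (intro cSup_upper[OF _ bdd_above_entangled_values] CollectI exI[of _ "CARD('n)"] exI[of _ ?psi]
        exI[of _ ?obs] conjI refl unit obs)
  finally show ?thesis .
qed

lemma entangled_bias_ge:
  fixes T :: "('n::finite) tensor6" and S :: "'n mat set"
  assumes basis: "pauli_like_basis S" and herm: "tensor_hermitian T" and Z_pos: "normZ T S > 0"
  shows "real CARD('n) ^ 3 * norm_2eps T / normZ T S \<le> entangled_bias S S S (game_pi T S) (game_sign T)"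
    and "0 \<le> norm_2eps T"
proof -
  let ?K = "normZ T S * entangled_bias S S S (game_pi T S) (game_sign T) / real CARD('n) ^ 3"
  have radius: "cmod (vec_inner z (kernel_apply (tensor_kernel T) z)) \<le> ?K" if "vec_norm2 z = 1" for z
    using entangled_bias_ge_quadratic_form[OF basis herm Z_pos that] Z_pos by (simp add: field_simps)
  show "0 \<le> norm_2eps T"
    by (rule norm_2eps_bounds(1)[OF herm radius])
  have "norm_2eps T \<le> ?K"
    by (rule norm_2eps_bounds(2)[OF herm radius])
  then show "real CARD('n) ^ 3 * norm_2eps T / normZ T S \<le> entangled_bias S S S (game_pi T S) (game_sign T)"
    using Z_pos by (simp add: field_simps)
qed

theorem mainTheorem9:
  fixes T :: "('n::finite) tensor6" and S :: "'n mat set"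
  assumes "T \<noteq> (\<lambda>_ _ _ _ _ _. 0)"
    and "tensor_hermitian T"
    and "pauli_like_basis S"
    and "normZ T S > 0"
  shows "classical_bias S S S (game_pi T S) (game_sign T) \<le> real CARD('n) powr (9/2) * norm_3eps T / normZ T S
       \<and> entangled_bias S S S (game_pi T S) (game_sign T) \<ge> real CARD('n) ^ 3 * norm_2eps T / normZ T S
       \<and> entangled_bias S S S (game_pi T S) (game_sign T)
           \<ge> real CARD('n) powr (-3/2) * (norm_2eps T / norm_3eps T) * classical_bias S S S (game_pi T S) (game_sign T)"
proof -
  let ?n = "real CARD('n)" and ?Z = "normZ T S"
  let ?classical = "classical_bias S S S (game_pi T S) (game_sign T)"
  let ?entangled = "entangled_bias S S S (game_pi T S) (game_sign T)"
  have classical: "?classical \<le> ?n powr (9/2) * norm_3eps T / ?Z"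
    by (rule classical_bias_le[OF assms(3,4)])
  have entangled: "?n ^ 3 * norm_2eps T / ?Z \<le> ?entangled" and norm_2eps: "0 \<le> norm_2eps T"
    by (rule entangled_bias_ge[OF assms(3,2,4)])+
  have "?n powr (-3/2) * (norm_2eps T / norm_3eps T) * ?classical
      \<le> ?n powr (-3/2) * (norm_2eps T / norm_3eps T) * (?n powr (9/2) * norm_3eps T / ?Z)"
    using classical norm_2eps norm_3eps_nonneg[of T] by (intro mult_left_mono) auto
  also have "\<dots> \<le> ?n ^ 3 * norm_2eps T / ?Z"
  proof (cases "norm_3eps T = 0")
    case False
    have "?n powr (-3/2) * ?n powr (9/2) = ?n ^ 3"
      by (simp add: powr_add[symmetric] powr_realpow[of _ 3, simplified])
    then show ?thesis
      using False by (simp add: mult_ac)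
  qed (use norm_2eps assms(4) in simp)
  finally show ?thesis
    using classical entangled by linarith
qed

end
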